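(* Let $P$ be a projection algebra, let $p,q\in P$, and put $p'=q\delta_p$ and $q'=p\theta_q$. Then: (i) $p'\le p$, $q'\le q$ and $p'\,\mathscr F\,q'$; (ii) $\theta_p\theta_q=\theta_{p'}\theta_{q'}$ and $\delta_q\delta_p=\delta_{q'}\delta_{p'}$; (iii) if $p\le r\,\mathscr F\,q$ for some $r\in P$, then $p'=p$; (iv) if $p\,\mathscr F\,s\ge q$ for some $s\in P$, then $q'=q$.
   Context: Maps are written to the right of their arguments and composed left to right ($p\,\alpha\beta=(p\alpha)\beta$). A projection algebra is a set $P$ with maps $\theta_p,\delta_p:P\to P$ ($p\in P$) such that for all $p,q\in P$: $p\theta_p=p$, $p\delta_p=p$; $p\theta_{q\theta_p}=q\theta_p$, $p\delta_{q\delta_p}=q\delta_p$; $\theta_q\theta_{q\theta_p}=\theta_q\theta_p$, $\delta_q\delta_{q\delta_p}=\delta_q\delta_p$; $\theta_p\delta_p=\theta_p$, $\delta_p\theta_p=\delta_p$; $\theta_{p\delta_q}\theta_p=\theta_q\theta_p$, $\delta_{p\theta_q}\delta_p=\delta_q\delta_p$. The partial order is $p\le q\iff p=p\theta_q$ (equivalently $p=p\delta_q$), and $p\,\mathscr F\,q$ means $p=q\delta_p$ and $q=p\theta_q$. *)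

theory Defs
  imports Main
begin

(* Convention: th p x  denotes  x theta_p  (the map theta_p applied to x),
   dl p x  denotes  x delta_p.  Maps act on the right and compose left to right,
   so the composite map  theta_p theta_q  is  (%x. th q (th p x)). *)

definition projection_algebra :: "'a set \<Rightarrow> ('a \<Rightarrow> 'a \<Rightarrow> 'a) \<Rightarrow> ('a \<Rightarrow> 'a \<Rightarrow> 'a) \<Rightarrow> bool" where
  "projection_algebra P th dl \<longleftrightarrow>
     (\<forall>p\<in>P. \<forall>x\<in>P. th p x \<in> P \<and> dl p x \<in> P) \<and>
     (\<forall>p\<in>P. \<forall>q\<in>P.
        th p p = p \<and> dl p p = p \<and>
        th (th p q) p = th p q \<and> dl (dl p q) p = dl p q \<and>
        (\<forall>x\<in>P. th (th p q) (th q x) = th p (th q x)) \<and>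
        (\<forall>x\<in>P. dl (dl p q) (dl q x) = dl p (dl q x)) \<and>
        (\<forall>x\<in>P. dl p (th p x) = th p x) \<and>
        (\<forall>x\<in>P. th p (dl p x) = dl p x) \<and>
        (\<forall>x\<in>P. th p (th (dl q p) x) = th p (th q x)) \<and>
        (\<forall>x\<in>P. dl p (dl (th q p) x) = dl p (dl q x)))"

definition pa_le :: "('a \<Rightarrow> 'a \<Rightarrow> 'a) \<Rightarrow> 'a \<Rightarrow> 'a \<Rightarrow> bool" where
  "pa_le th p q \<longleftrightarrow> p = th q p"

definition pa_F :: "('a \<Rightarrow> 'a \<Rightarrow> 'a) \<Rightarrow> ('a \<Rightarrow> 'a \<Rightarrow> 'a) \<Rightarrow> 'a \<Rightarrow> 'a \<Rightarrow> bool" where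
  "pa_F th dl p q \<longleftrightarrow> p = dl p q \<and> q = th q p"

end

theory Submission
  imports Defs
begin

text \<open>
  The axioms are invariant under exchanging \<open>\<theta>\<close> and \<open>\<delta>\<close>, so every fact has a dual,
  and (ii)--(iv) are dual pairs. The axiom \<open>\<theta>\<^bsub>q\<delta>\<^sub>p\<^esub>\<theta>\<^sub>q = \<theta>\<^sub>p\<theta>\<^sub>q\<close>
  applied to \<open>p\<close> gives \<open>p'\<theta>\<^sub>q = p\<theta>\<^sub>q = q'\<close> (as \<open>p \<theta>\<^bsub>p'\<^esub> = p'\<close> for \<open>p' \<le> p\<close>), and then
  \<open>\<theta>\<^sub>p\<theta>\<^sub>q = \<theta>\<^bsub>p'\<^esub>\<theta>\<^sub>q = \<theta>\<^bsub>p'\<^esub>\<theta>\<^bsub>p'\<theta>\<^sub>q\<^esub> = \<theta>\<^bsub>p'\<^esub>\<theta>\<^bsub>q'\<^esub>\<close>.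
  For (iii), \<open>p \<le> r\<close> gives \<open>\<delta>\<^sub>r\<delta>\<^sub>p = \<delta>\<^sub>p\<close>, so \<open>q\<delta>\<^sub>p = q\<delta>\<^sub>r\<delta>\<^sub>p = r\<delta>\<^sub>p = p\<close>.
\<close>

lemma projection_algebra_dual:
  "projection_algebra P th dl \<Longrightarrow> projection_algebra P dl th"
  unfolding projection_algebra_def by blast

lemma pa_F_dual: "pa_F dl th p q \<longleftrightarrow> pa_F th dl q p"
  unfolding pa_F_def by blast

locale proj_algebra =
  fixes P :: "'a set" and th dl :: "'a \<Rightarrow> 'a \<Rightarrow> 'a"
  assumes projection_algebra: "projection_algebra P th dl"
begin

lemma dual: "proj_algebra P dl th"
  using projection_algebra by unfold_locales (rule projection_algebra_dual)

lemma th_closed: "p \<in> P \<Longrightarrow> x \<in> P \<Longrightarrow> th p x \<in> P"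
  using projection_algebra unfolding projection_algebra_def by blast

lemma th_self: "p \<in> P \<Longrightarrow> th p p = p"
  using projection_algebra unfolding projection_algebra_def by blast

lemma th_at_th: "p \<in> P \<Longrightarrow> q \<in> P \<Longrightarrow> th (th p q) p = th p q"
  using projection_algebra unfolding projection_algebra_def by blast

lemma th_th_th:
  "p \<in> P \<Longrightarrow> q \<in> P \<Longrightarrow> x \<in> P \<Longrightarrow> th (th p q) (th q x) = th p (th q x)"
  using projection_algebra unfolding projection_algebra_def by blast

lemma dl_th: "p \<in> P \<Longrightarrow> x \<in> P \<Longrightarrow> dl p (th p x) = th p x"
  using projection_algebra unfolding projection_algebra_def by blast

lemma th_th_dl:
  "p \<in> P \<Longrightarrow> q \<in> P \<Longrightarrow> x \<in> P \<Longrightarrow> th p (th (dl q p) x) = th p (th q x)"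
  using projection_algebra unfolding projection_algebra_def by blast

lemmas dl_closed = proj_algebra.th_closed[OF dual]
lemmas th_dl = proj_algebra.dl_th[OF dual]

lemma th_idem: "p \<in> P \<Longrightarrow> x \<in> P \<Longrightarrow> th p (th p x) = th p x"
  by (metis dl_th th_dl th_closed)

lemma th_below: "p \<in> P \<Longrightarrow> x \<in> P \<Longrightarrow> pa_le th (th p x) p"
  unfolding pa_le_def using th_idem by simp

lemma dl_below: "p \<in> P \<Longrightarrow> x \<in> P \<Longrightarrow> pa_le th (dl p x) p"
  unfolding pa_le_def using th_dl by simp

lemma pa_le_dual: "p \<in> P \<Longrightarrow> q \<in> P \<Longrightarrow> pa_le dl p q \<longleftrightarrow> pa_le th p q"
  unfolding pa_le_def by (metis dl_th th_dl)

lemma th_eq_if_le: "p \<in> P \<Longrightarrow> q \<in> P \<Longrightarrow> pa_le th q p \<Longrightarrow> th q p = q"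
  unfolding pa_le_def by (metis th_at_th)

lemma th_th_eq_if_le:
  assumes "p \<in> P" "r \<in> P" "x \<in> P" "pa_le th p r"
  shows "th p (th r x) = th p x"
proof -
  have "th p (th r x) = th p (th (dl r p) x)"
    using assms th_th_dl by simp
  also have "dl r p = p"
    using assms pa_le_dual unfolding pa_le_def by metis
  finally show ?thesis
    using assms th_idem by simp
qed

lemma th_eq_self_if_F_above:
  assumes "p \<in> P" "q \<in> P" "s \<in> P" "pa_F th dl p s" "pa_le th q s"
  shows "th q p = q"
proof -
  have "th q p = th q (th s p)"
    using assms th_th_eq_if_le by simp
  also have "th s p = s"
    using \<open>pa_F th dl p s\<close> unfolding pa_F_def by metis
  finally show ?thesis
    using assms th_eq_if_le by simp
qed

lemma th_dl_eq_th:
  assumes "p \<in> P" "q \<in> P"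
  shows "th q (dl p q) = th q p"
proof -
  have "th (dl p q) p = dl p q"
    using assms dl_below dl_closed th_eq_if_le by simp
  then have "th q (dl p q) = th q (th (dl p q) p)"
    by simp
  also have "\<dots> = th q (th p p)"
    using assms th_th_dl by simp
  finally show ?thesis
    using assms th_self by simp
qed

lemma th_th_eq_th_th_proj:
  assumes "p \<in> P" "q \<in> P" "x \<in> P"
  shows "th q (th p x) = th (th q p) (th (dl p q) x)"
proof -
  have "th q (th p x) = th q (th (dl p q) x)"
    using assms th_th_dl by simp
  also have "\<dots> = th (th q (dl p q)) (th (dl p q) x)"
    using assms th_th_th dl_closed by simp
  finally show ?thesis
    using assms th_dl_eq_th by simp
qed

lemma th_proj_proj:
  assumes "p \<in> P" "q \<in> P"
  shows "th (th q p) (dl p q) = th q p"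
proof -
  have "th (th q p) (dl p q) = th (th q p) (th p (dl p q))"
    using assms th_dl by simp
  also have "\<dots> = th q (th p (dl p q))"
    using assms th_th_th dl_closed by simp
  also have "\<dots> = th q (dl p q)"
    using assms th_dl by simp
  finally show ?thesis
    using assms th_dl_eq_th by simp
qed

lemma proj_F_proj: "p \<in> P \<Longrightarrow> q \<in> P \<Longrightarrow> pa_F th dl (dl p q) (th q p)"
  unfolding pa_F_def using th_proj_proj proj_algebra.th_proj_proj[OF dual] by simp

end

theorem lemma4p12:
  fixes P :: "'a set" and th dl :: "'a \<Rightarrow> 'a \<Rightarrow> 'a" and p q :: 'a
  assumes PA: "projection_algebra P th dl"
    and pP: "p \<in> P" and qP: "q \<in> P"
  defines "p' \<equiv> dl p q" and "q' \<equiv> th q p"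
  shows "(pa_le th p' p \<and> pa_le th q' q \<and> pa_F th dl p' q') \<and>
         ((\<forall>x\<in>P. th q (th p x) = th q' (th p' x)) \<and>
          (\<forall>x\<in>P. dl p (dl q x) = dl p' (dl q' x))) \<and>
         (\<forall>r\<in>P. pa_le th p r \<and> pa_F th dl r q \<longrightarrow> p' = p) \<and>
         (\<forall>s\<in>P. pa_F th dl p s \<and> pa_le th q s \<longrightarrow> q' = q)"
proof -
  interpret proj_algebra P th dl
    using PA by unfold_locales
  interpret dual: proj_algebra P dl th
    by (rule dual)
  have "pa_le th p' p" "pa_le th q' q" "pa_F th dl p' q'"
    unfolding p'_def q'_def using pP qP by (simp_all add: dl_below th_below proj_F_proj)
  moreover have "\<forall>x\<in>P. th q (th p x) = th q' (th p' x)"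
    unfolding p'_def q'_def by (intro ballI th_th_eq_th_th_proj[OF pP qP])
  moreover have "\<forall>x\<in>P. dl p (dl q x) = dl p' (dl q' x)"
    unfolding p'_def q'_def by (intro ballI dual.th_th_eq_th_th_proj[OF qP pP])
  moreover have "\<forall>r\<in>P. pa_le th p r \<and> pa_F th dl r q \<longrightarrow> p' = p"
  proof (intro ballI impI)
    fix r
    assume "r \<in> P" and "pa_le th p r \<and> pa_F th dl r q"
    then show "p' = p"
      unfolding p'_def
      using dual.th_eq_self_if_F_above[OF qP pP] pa_le_dual[OF pP] pa_F_dual[of dl th]
      by simp
  qed
  moreover have "\<forall>s\<in>P. pa_F th dl p s \<and> pa_le th q s \<longrightarrow> q' = q"
  proof (intro ballI impI)
    fix s
    assume "s \<in> P" and "pa_F th dl p s \<and> pa_le th q s"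
    then show "q' = q"
      unfolding q'_def using th_eq_self_if_F_above[OF pP qP] by simp
  qed
  ultimately show ?thesis
    by (intro conjI)
qed

end
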